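(* Let $a>0$, $b\ge0$, $\mu>0$, and let $V,Q,f$ satisfy $(V_1)$–$(V_3)$, $(Q)$, $(f_1)$–$(f_4)$ (see context). Let $(u_n)\subset X$ be such that there is $d>0$ with $I(u_n)\le d$ for all $n$ and $\|I'(u_n)\|_{X'}(1+\|u_n\|_X)\to0$ as $n\to\infty$. Then $(u_n)$ is bounded in $H^1(\mathbb R^2)$.
   Context: $V:(0,\infty)\to\mathbb R$ continuous, $V^\pm=\max\{\pm V,0\}$: $(V_1)$ there are $a_1,a_2$ with $a_2\in L^\infty$, $\inf_{t\ge2}a_1>0$, $\inf_{t>0}a_2>0$, $a_1(t)\ln(1+t)\le V^+(t)\le a_2(t)\ln(1+t)$, $t>0$; $(V_2)$ there is $a_3$, positive on a set of positive measure, with $V^-(t)\le a_3(t)/t$ and either $a_3\in L^\infty$ or $a_3(t)=t^{-\lambda}$, $\lambda\in[1,3)$; $(V_3)$ $V<0$ on some open $\mathcal I\subset(0,\infty)$. $(Q)$: $Q\in C(\mathbb R^2)$, $\inf Q=Q_0>0$, $Q\in L^p(\mathbb R^2)$, some $p\in(1,\infty]$. $F(t)=\int_0^tf$; $(f_1)$ $f$ continuous, $f(0)=0$, $\lim_{s\to+\infty}f(s)/(e^{\alpha s^2}-1)=0$ for $\alpha>4\pi$, $=+\infty$ for $\alpha<4\pi$; $(f_2)$ $|f(t)|/|t|^\tau\to0$ as $t\to0$, some $\tau>1$; $(f_3)$ $f(t)t\ge\theta F(t)>0$ for $t\ne0$, some $\theta\ge4$; $(f_4)$ $F(t)\ge C_q|t|^q$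 for all $t$, some $q>4$, $C_q>0$. $X=\{u\in H^1(\mathbb R^2):\int\ln(1+|x|)u^2<\infty\}$, $\|u\|_X^2=\|\nabla u\|_2^2+\|u\|_2^2+\int\ln(1+|x|)u^2$, $X'$ its dual. $P(u)=\iint V(|x-y|)u^2(x)u^2(y)dxdy$, $I(u)=\frac a2\|\nabla u\|_2^2+\frac b4\|\nabla u\|_2^4+\frac12\int Qu^2+\frac\mu4P(u)-\int F(u)$, a $C^1$ functional on $X$. *)

theory Defs
  imports "HOL-Analysis.Analysis"
begin

type_synonym R2 = "real^2"

definition test_fun :: "(R2 \<Rightarrow> real) \<Rightarrow> bool" where
  "test_fun \<phi> \<longleftrightarrow> compact (closure {x. \<phi> x \<noteq> 0}) \<and> (\<forall>x. \<phi> differentiable (at x)) \<and>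
     (\<forall>i. continuous_on UNIV (\<lambda>x. frechet_derivative \<phi> (at x) (axis i 1)))"

definition weak_grad :: "(R2 \<Rightarrow> real) \<Rightarrow> (R2 \<Rightarrow> R2) \<Rightarrow> bool" where
  "weak_grad u g \<longleftrightarrow> (\<forall>\<phi>. test_fun \<phi> \<longrightarrow> (\<forall>i.
      (\<integral>x. u x * frechet_derivative \<phi> (at x) (axis i 1) \<partial>lborel) = - (\<integral>x. g x $ i * \<phi> x \<partial>lborel)))"

definition L2_grad :: "(R2 \<Rightarrow> real) \<Rightarrow> (R2 \<Rightarrow> R2) \<Rightarrow> bool" where
  "L2_grad u g \<longleftrightarrow> g \<in> borel_measurable lborel \<and> integrable lborel (\<lambda>x. (norm (g x))\<^sup>2) \<and> weak_grad u g"

definition H1 :: "(R2 \<Rightarrow> real) set" where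
  "H1 = {u. u \<in> borel_measurable lborel \<and> integrable lborel (\<lambda>x. (u x)\<^sup>2) \<and> (\<exists>g. L2_grad u g)}"

definition grad :: "(R2 \<Rightarrow> real) \<Rightarrow> (R2 \<Rightarrow> R2)" where
  "grad u = (SOME g. L2_grad u g)"

definition grad_norm2 :: "(R2 \<Rightarrow> real) \<Rightarrow> real" where
  "grad_norm2 u = (\<integral>x. (norm (grad u x))\<^sup>2 \<partial>lborel)"

definition L2_norm2 :: "(R2 \<Rightarrow> real) \<Rightarrow> real" where
  "L2_norm2 u = (\<integral>x. (u x)\<^sup>2 \<partial>lborel)"

definition H1_norm :: "(R2 \<Rightarrow> real) \<Rightarrow> real" where
  "H1_norm u = sqrt (grad_norm2 u + L2_norm2 u)"

definition Xspace :: "(R2 \<Rightarrow> real) set" where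
  "Xspace = {u \<in> H1. integrable lborel (\<lambda>x. ln (1 + norm x) * (u x)\<^sup>2)}"

definition X_norm :: "(R2 \<Rightarrow> real) \<Rightarrow> real" where
  "X_norm u = sqrt (grad_norm2 u + L2_norm2 u + (\<integral>x. ln (1 + norm x) * (u x)\<^sup>2 \<partial>lborel))"

definition prim :: "(real \<Rightarrow> real) \<Rightarrow> real \<Rightarrow> real" where
  "prim f t = (if 0 \<le> t then integral {0..t} f else - integral {t..0} f)"

definition Pfun :: "(real \<Rightarrow> real) \<Rightarrow> (R2 \<Rightarrow> real) \<Rightarrow> real" where
  "Pfun V u = (\<integral>x. (\<integral>y. V (norm (x - y)) * (u x)\<^sup>2 * (u y)\<^sup>2 \<partial>lborel) \<partial>lborel)"

definition Ifun :: "real \<Rightarrow> real \<Rightarrow> real \<Rightarrow> (R2 \<Rightarrow> real) \<Rightarrow> (real \<Rightarrow> real) \<Rightarrow> (real \<Rightarrow> real)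
                    \<Rightarrow> (R2 \<Rightarrow> real) \<Rightarrow> real" where
  "Ifun a b \<mu> Q V f u = a / 2 * grad_norm2 u + b / 4 * (grad_norm2 u)\<^sup>2
      + 1 / 2 * (\<integral>x. Q x * (u x)\<^sup>2 \<partial>lborel) + \<mu> / 4 * Pfun V u
      - (\<integral>x. prim f (u x) \<partial>lborel)"

definition frechet_X :: "((R2 \<Rightarrow> real) \<Rightarrow> real) \<Rightarrow> (R2 \<Rightarrow> real) \<Rightarrow> ((R2 \<Rightarrow> real) \<Rightarrow> real) \<Rightarrow> bool" where
  "frechet_X J u D \<longleftrightarrow>
     (\<forall>v\<in>Xspace. \<forall>w\<in>Xspace. \<forall>s t. D (\<lambda>x. s * v x + t * w x) = s * D v + t * D w) \<and>
     (\<exists>C. \<forall>v\<in>Xspace. \<bar>D v\<bar> \<le> C * X_norm v) \<and>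
     (\<forall>\<epsilon>>0. \<exists>\<delta>>0. \<forall>h\<in>Xspace. X_norm h < \<delta> \<longrightarrow>
         \<bar>J (\<lambda>x. u x + h x) - J u - D h\<bar> \<le> \<epsilon> * X_norm h)"

definition dual_norm :: "((R2 \<Rightarrow> real) \<Rightarrow> real) \<Rightarrow> real" where
  "dual_norm D = Sup ((\<lambda>v. \<bar>D v\<bar>) ` {v \<in> Xspace. X_norm v \<le> 1})"

definition posp :: "(real \<Rightarrow> real) \<Rightarrow> real \<Rightarrow> real" where "posp V t = max (V t) 0"
definition negp :: "(real \<Rightarrow> real) \<Rightarrow> real \<Rightarrow> real" where "negp V t = max (- V t) 0"

definition Linf_pos :: "(real \<Rightarrow> real) \<Rightarrow> bool" where
  "Linf_pos a \<longleftrightarrow> a \<in> borel_measurable lborel \<and> (\<exists>M. AE t in lborel. 0 < t \<longrightarrow> \<bar>a t\<bar> \<le> M)"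

definition cond_V1 :: "(real \<Rightarrow> real) \<Rightarrow> bool" where
  "cond_V1 V \<longleftrightarrow> (\<exists>a1 a2. Linf_pos a2 \<and> (\<exists>c>0. \<forall>t\<ge>2. a1 t \<ge> c) \<and> (\<exists>c>0. \<forall>t>0. a2 t \<ge> c) \<and>
      (\<forall>t>0. a1 t * ln (1 + t) \<le> posp V t \<and> posp V t \<le> a2 t * ln (1 + t)))"

definition cond_V2 :: "(real \<Rightarrow> real) \<Rightarrow> bool" where
  "cond_V2 V \<longleftrightarrow> (\<exists>a3. a3 \<in> borel_measurable lborel \<and> emeasure lborel {t. 0 < t \<and> 0 < a3 t} > 0 \<and>
      (\<forall>t>0. negp V t \<le> a3 t / t) \<and>
      (Linf_pos a3 \<or> (\<exists>lam. 1 \<le> lam \<and> lam < 3 \<and> (\<forall>t>0. a3 t = t powr (- lam)))))"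

definition cond_V3 :: "(real \<Rightarrow> real) \<Rightarrow> bool" where
  "cond_V3 V \<longleftrightarrow> (\<exists>I. open I \<and> I \<noteq> {} \<and> I \<subseteq> {0<..} \<and> (\<forall>t\<in>I. V t < 0))"

definition cond_Q :: "(R2 \<Rightarrow> real) \<Rightarrow> bool" where
  "cond_Q Q \<longleftrightarrow> continuous_on UNIV Q \<and> (\<exists>Q0>0. \<forall>x. Q0 \<le> Q x) \<and>
      ((\<exists>p>1. integrable lborel (\<lambda>x. \<bar>Q x\<bar> powr p)) \<or> (\<exists>M. AE x in lborel. \<bar>Q x\<bar> \<le> M))"

definition cond_f :: "(real \<Rightarrow> real) \<Rightarrow> bool" where
  "cond_f f \<longleftrightarrow> continuous_on UNIV f \<and> f 0 = 0 \<and>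
     (\<forall>\<alpha>>4*pi. ((\<lambda>s. f s / (exp (\<alpha> * s\<^sup>2) - 1)) \<longlongrightarrow> 0) at_top) \<and>
     (\<forall>\<alpha>. 0 < \<alpha> \<and> \<alpha> < 4*pi \<longrightarrow> filterlim (\<lambda>s. f s / (exp (\<alpha> * s\<^sup>2) - 1)) at_top at_top) \<and>
     (\<exists>\<tau>>1. ((\<lambda>t. \<bar>f t\<bar> / \<bar>t\<bar> powr \<tau>) \<longlongrightarrow> 0) (at 0)) \<and>
     (\<exists>\<theta>\<ge>4. \<forall>t. t \<noteq> 0 \<longrightarrow> f t * t \<ge> \<theta> * prim f t \<and> prim f t > 0) \<and>
     (\<exists>q>4. \<exists>C>0. \<forall>t. prim f t \<ge> C * \<bar>t\<bar> powr q)"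

end

theory Submission
  imports Defs
begin

text \<open>
  For \<open>u \<in> X\<close> the ray \<open>s \<mapsto> I(s u)\<close> equals \<open>\<alpha> s\<^sup>2 + \<beta> s\<^sup>4 - \<Phi>(s)\<close>, where
  \<open>2 \<alpha> = a \<parallel>\<nabla>u\<parallel>\<^sup>2 + \<integral> Q u\<^sup>2\<close>, \<open>\<beta>\<close> collects the Kirchhoff and Choquard terms and
  \<open>\<Phi>(s) = \<integral> F(s u)\<close>. By (f3) with \<open>\<theta> \<ge> 4\<close>, \<open>\<Phi>(s) \<le> s\<^sup>4 \<Phi>(1)\<close> for \<open>0 < s \<le> 1\<close>; comparing
  with the derivative \<open>I'(u) u\<close> of the ray at \<open>s = 1\<close> gives \<open>I'(u) u \<le> 2 \<alpha> + 4 \<beta> - 4 \<Phi>(1)\<close>,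
  so the quartic terms cancel in
  \<open>a \<parallel>\<nabla>u\<parallel>\<^sup>2 + \<integral> Q u\<^sup>2 \<le> 4 I(u) - I'(u) u \<le> 4 d + \<parallel>I'(u)\<parallel> (1 + \<parallel>u\<parallel>)\<close>,
  and \<open>Q \<ge> Q\<^sub>0 > 0\<close> turns the left-hand side into a bound on the \<open>H\<^sup>1\<close> norm.

  Since \<open>grad u\<close> is just some chosen weak gradient, the scaling \<open>\<parallel>\<nabla>(s u)\<parallel>\<^sup>2 = s\<^sup>2 \<parallel>\<nabla>u\<parallel>\<^sup>2\<close>
  rests on the uniqueness of weak gradients, which is obtained by testing against explicit
  \<open>C\<^sup>1\<close> functions increasing to the indicator of a box.
\<close>

section \<open>Test functions approximating the indicator of a box\<close>

definition pos_sq :: "real \<Rightarrow> real" where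
  "pos_sq t = (max 0 t)\<^sup>2"

lemma has_real_derivative_pos_sq: "(pos_sq has_real_derivative 2 * max 0 t) (at t)"
proof (cases "t = 0")
  case True
  have "((\<lambda>h. max 0 h) \<longlongrightarrow> max 0 0) (at (0::real))"
    by (intro tendsto_intros)
  moreover have "\<forall>\<^sub>F h in at 0. max 0 h = (pos_sq (0 + h) - pos_sq 0) / h"
    by (auto simp: eventually_at_filter pos_sq_def power2_eq_square max_def)
  ultimately show ?thesis
    using True by (simp add: DERIV_def Lim_transform_eventually)
next
  case False
  then consider "t > 0" | "t < 0" by linarith
  then show ?thesis
  proof cases
    case 1
    have "((\<lambda>t. t\<^sup>2) has_real_derivative 2 * max 0 t) (at t)"
      using 1 by (auto intro!: derivative_eq_intros)
    then show ?thesis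
      by (rule has_field_derivative_transform_within_open[where S="{0<..}"])
         (use 1 in \<open>auto simp: pos_sq_def\<close>)
  next
    case 2
    have "((\<lambda>t. 0) has_real_derivative 2 * max 0 t) (at t)"
      using 2 by (auto intro!: derivative_eq_intros)
    then show ?thesis
      by (rule has_field_derivative_transform_within_open[where S="{..<0}"])
         (use 2 in \<open>auto simp: pos_sq_def\<close>)
  qed
qed

definition bump :: "real \<Rightarrow> real \<Rightarrow> real \<Rightarrow> real" where
  "bump a b t = pos_sq (t - a) * pos_sq (b - t)"

definition bump' :: "real \<Rightarrow> real \<Rightarrow> real \<Rightarrow> real" where
  "bump' a b t = 2 * max 0 (t - a) * pos_sq (b - t) - pos_sq (t - a) * (2 * max 0 (b - t))"

lemma has_real_derivative_bump: "(bump a b has_real_derivative bump' a b t) (at t)"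
  unfolding bump_def[abs_def] bump'_def
  by (auto intro!: derivative_eq_intros DERIV_chain2[OF has_real_derivative_pos_sq])

lemma continuous_on_bump: "continuous_on UNIV (bump a b)" "continuous_on UNIV (bump' a b)"
  unfolding bump_def[abs_def] bump'_def[abs_def] pos_sq_def by (intro continuous_intros)+

lemma bump_nonneg: "0 \<le> bump a b t"
  by (simp add: bump_def pos_sq_def)

lemma bump_pos_iff: "0 < bump a b t \<longleftrightarrow> a < t \<and> t < b"
  by (auto simp: bump_def pos_sq_def max_def zero_less_mult_iff)

lemma has_derivative_component_comp:
  assumes "(g has_real_derivative g') (at (x $ i))"
  shows "((\<lambda>x::real^'n. g (x $ i)) has_derivative (\<lambda>v. g' * v $ i)) (at x)"
  using has_derivative_compose[OF bounded_linear_imp_has_derivative[OF bounded_linear_vec_nth]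
      assms[unfolded has_field_derivative_def]]
  by simp

definition box_bump :: "R2 \<Rightarrow> R2 \<Rightarrow> R2 \<Rightarrow> real" where
  "box_bump a b x = bump (a$1) (b$1) (x$1) * bump (a$2) (b$2) (x$2)"

definition box_bump' :: "R2 \<Rightarrow> R2 \<Rightarrow> R2 \<Rightarrow> R2 \<Rightarrow> real" where
  "box_bump' a b x v = bump' (a$1) (b$1) (x$1) * v$1 * bump (a$2) (b$2) (x$2)
     + bump (a$1) (b$1) (x$1) * (bump' (a$2) (b$2) (x$2) * v$2)"

lemma has_derivative_box_bump: "(box_bump a b has_derivative box_bump' a b x) (at x)"
proof -
  have "((\<lambda>x. bump (a$i) (b$i) (x$i)) has_derivative (\<lambda>v. bump' (a$i) (b$i) (x$i) * v$i)) (at x)"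
    for i :: 2
    by (rule has_derivative_component_comp[OF has_real_derivative_bump])
  from has_derivative_mult[OF this this, of 1 2] show ?thesis
    unfolding box_bump_def[abs_def] box_bump'_def by (simp add: algebra_simps)
qed

lemma continuous_on_component_comp:
  "continuous_on UNIV g \<Longrightarrow> continuous_on UNIV (\<lambda>x::real^'n. g (x $ i))"
  by (rule continuous_on_compose2[where t=UNIV]) (auto intro!: continuous_on_component continuous_on_id)

lemma continuous_on_box_bump: "continuous_on UNIV (box_bump a b)"
  unfolding box_bump_def[abs_def]
  by (intro continuous_intros continuous_on_component_comp continuous_on_bump)

lemma box_bump_nonneg: "0 \<le> box_bump a b x"
  by (simp add: box_bump_def bump_nonneg)

lemma box_bump_pos_iff: "0 < box_bump a b x \<longleftrightarrow> x \<in> box a b"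
  using bump_nonneg[of "a$1" "b$1" "x$1"] bump_nonneg[of "a$2" "b$2" "x$2"]
  by (auto simp: box_bump_def zero_less_mult_iff bump_pos_iff mem_box_cart forall_2)

definition box_approx :: "nat \<Rightarrow> R2 \<Rightarrow> R2 \<Rightarrow> R2 \<Rightarrow> real" where
  "box_approx k a b x = real k * box_bump a b x / (1 + real k * box_bump a b x)"

lemma has_derivative_box_approx:
  "(box_approx k a b has_derivative
     (\<lambda>v. real k / (1 + real k * box_bump a b x)\<^sup>2 * box_bump' a b x v)) (at x)"
proof -
  have pos: "0 < 1 + real k * box_bump a b x"
    using box_bump_nonneg[of a b x] by (simp add: add_pos_nonneg)
  have "((\<lambda>y. real k * y / (1 + real k * y)) has_real_derivative
      real k / (1 + real k * box_bump a b x)\<^sup>2) (at (box_bump a b x))"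
    using pos by (auto intro!: derivative_eq_intros simp: field_simps power2_eq_square)
  from has_derivative_compose[OF has_derivative_box_bump this[unfolded has_field_derivative_def]]
  show ?thesis
    unfolding box_approx_def[abs_def] by (simp add: ac_simps)
qed

lemma box_approx_eq_0: "x \<notin> box a b \<Longrightarrow> box_approx k a b x = 0"
  using box_bump_pos_iff[of a b x] box_bump_nonneg[of a b x] by (simp add: box_approx_def)

lemma box_approx_bounds: "0 \<le> box_approx k a b x" "box_approx k a b x \<le> 1"
proof -
  have "0 \<le> real k * box_bump a b x" using box_bump_nonneg[of a b x] by simp
  then show "0 \<le> box_approx k a b x" "box_approx k a b x \<le> 1"
    by (simp_all add: box_approx_def divide_le_eq_1)
qed

lemma test_fun_box_approx: "test_fun (box_approx k a b)"
  unfolding test_fun_def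
proof (intro conjI allI)
  have "{x. box_approx k a b x \<noteq> 0} \<subseteq> box a b"
    using box_approx_eq_0 by blast
  then show "compact (closure {x. box_approx k a b x \<noteq> 0})"
    using bounded_box bounded_subset compact_closure by blast
  show "box_approx k a b differentiable at x" for x
    using has_derivative_box_approx by (rule differentiableI)
  fix i :: 2
  have eq: "(\<lambda>x. frechet_derivative (box_approx k a b) (at x) (axis i 1))
      = (\<lambda>x. real k / (1 + real k * box_bump a b x)\<^sup>2 * box_bump' a b x (axis i 1))"
    using frechet_derivative_at[OF has_derivative_box_approx] by metis
  have "(1 + real k * box_bump a b x)\<^sup>2 \<noteq> 0" for x
    using box_bump_nonneg[of a b x] by (simp add: add_nonneg_eq_0_iff)
  then show "continuous_on UNIV (\<lambda>x. frechet_derivative (box_approx k a b) (at x) (axis i 1))"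
    unfolding eq box_bump'_def
    by (intro continuous_intros continuous_on_component_comp continuous_on_bump continuous_on_box_bump)
       auto
qed

lemma box_approx_measurable: "box_approx k a b \<in> borel_measurable lborel"
proof -
  have "continuous_on UNIV (box_approx k a b)"
    using has_derivative_box_approx by (metis continuous_at_imp_continuous_on has_derivative_continuous)
  then show ?thesis by (simp add: borel_measurable_continuous_onI)
qed

lemma box_approx_tendsto_indicator:
  "(\<lambda>k. box_approx k a b x) \<longlonglongrightarrow> indicator (box a b) x"
proof (cases "x \<in> box a b")
  case True
  then have pos: "0 < box_bump a b x" using box_bump_pos_iff by blast
  have "filterlim (\<lambda>k. 1 + real k * box_bump a b x) at_top sequentially"
    by (intro filterlim_tendsto_add_at_top[OF tendsto_const]
        filterlim_at_top_mult_tendsto_pos[OF tendsto_const pos] filterlim_real_sequentially)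
  then have "(\<lambda>k. 1 - inverse (1 + real k * box_bump a b x)) \<longlonglongrightarrow> 1 - 0"
    by (intro tendsto_diff tendsto_const tendsto_inverse_0_at_top)
  moreover have "1 - inverse (1 + real k * box_bump a b x) = box_approx k a b x" for k
  proof -
    have "1 + real k * box_bump a b x \<noteq> 0" using pos by (smt (verit) mult_nonneg_nonneg of_nat_0_le_iff)
    then show ?thesis by (simp add: box_approx_def field_simps)
  qed
  ultimately show ?thesis using True by simp
qed (simp add: box_approx_eq_0)

section \<open>Uniqueness of weak gradients\<close>

lemma AE_zero_if_box_integrals_zero:
  fixes k :: "'a::euclidean_space \<Rightarrow> real"
  assumes int: "integrable lborel k"
    and zero: "\<And>a b. (\<integral>x. k x * indicator (box a b) x \<partial>lborel) = 0"
  shows "AE x in lborel. k x = 0"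
proof -
  define kp where "kp x = max 0 (k x)" for x
  define kn where "kn x = max 0 (- k x)" for x
  have [measurable]: "k \<in> borel_measurable lborel" using int by auto
  have int_parts: "integrable lborel kp" "integrable lborel kn"
    unfolding kp_def[abs_def] kn_def[abs_def] using int by auto
  have nonneg_parts: "\<And>x. 0 \<le> kp x" "\<And>x. 0 \<le> kn x"
    by (simp_all add: kp_def kn_def)
  have emeasure_density_eq: "emeasure (density lborel p) A = ennreal (\<integral>x. p x * indicator A x \<partial>lborel)"
    if "integrable lborel p" "\<And>x. 0 \<le> p x" "A \<in> sets lborel" for p :: "'a \<Rightarrow> real" and A
  proof -
    have "integrable lborel (\<lambda>x. p x * indicator A x)"
      using integrable_mult_indicator[OF that(3) that(1)] by (simp add: mult.commute)
    then show ?thesis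
      using that by (simp add: emeasure_density nn_integral_set_ennreal nn_integral_eq_integral)
  qed
  have "density lborel kp = density lborel kn"
  proof (rule measure_eqI_generator_eq[where E="range (\<lambda>(a, b). box a b)" and \<Omega>=UNIV
        and A="\<lambda>n::nat. box (- (real n *\<^sub>R One)) (real n *\<^sub>R One)"])
    show "Int_stable (range (\<lambda>(a, b). box a b::'a set))"
      by (auto simp: Int_stable_def box_Int_box)
    show "sets (density lborel kp) = sigma_sets UNIV (range (\<lambda>(a, b). box a b))"
      "sets (density lborel kn) = sigma_sets UNIV (range (\<lambda>(a, b). box a b))"
      by (simp_all add: borel_eq_box)
    show "(\<Union>n::nat. box (- (real n *\<^sub>R One)) (real n *\<^sub>R One)) = (UNIV::'a set)"
      by (rule UN_box_eq_UNIV)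
    show "emeasure (density lborel kp) (box (- (real n *\<^sub>R One)) (real n *\<^sub>R One)) \<noteq> \<infinity>" for n
      by (simp add: emeasure_density_eq[OF int_parts(1) nonneg_parts(1)])
    fix X assume "X \<in> range (\<lambda>(a, b). box a b :: 'a set)"
    then obtain a b where X: "X = box a b" by auto
    have "integrable lborel (\<lambda>x. kp x * indicator X x)" "integrable lborel (\<lambda>x. kn x * indicator X x)"
      using X int_parts by (auto intro!: integrable_real_mult_indicator)
    then have "(\<integral>x. kp x * indicator X x \<partial>lborel) - (\<integral>x. kn x * indicator X x \<partial>lborel)
          = (\<integral>x. kp x * indicator X x - kn x * indicator X x \<partial>lborel)"
      by simp
    also have "\<dots> = (\<integral>x. k x * indicator X x \<partial>lborel)"
      by (intro Bochner_Integration.integral_cong) (auto simp: kp_def kn_def indicator_def)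
    finally have "(\<integral>x. kp x * indicator X x \<partial>lborel) = (\<integral>x. kn x * indicator X x \<partial>lborel)"
      using X zero by simp
    then show "emeasure (density lborel kp) X = emeasure (density lborel kn) X"
      using X by (simp add: emeasure_density_eq[OF int_parts(1) nonneg_parts(1)]
          emeasure_density_eq[OF int_parts(2) nonneg_parts(2)])
  qed auto
  then have "AE x in lborel. ennreal (kp x) = ennreal (kn x)"
    by (intro sigma_finite_measure.density_unique[OF sigma_finite_lborel])
       (auto simp: kp_def[abs_def] kn_def[abs_def])
  then show ?thesis
    by eventually_elim (auto simp: kp_def kn_def max_def split: if_splits)
qed

lemma AE_zero_if_local_box_integrals_zero:
  fixes h :: "'a::euclidean_space \<Rightarrow> real"
  assumes int: "\<And>a b. integrable lborel (\<lambda>x. h x * indicator (box a b) x)"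
    and zero: "\<And>a b. (\<integral>x. h x * indicator (box a b) x \<partial>lborel) = 0"
  shows "AE x in lborel. h x = 0"
proof -
  let ?B = "\<lambda>n::nat. box (- (real n *\<^sub>R One)) (real n *\<^sub>R One) :: 'a set"
  have "AE x in lborel. h x * indicator (?B n) x = 0" for n
  proof (rule AE_zero_if_box_integrals_zero[OF int])
    fix a b :: 'a
    obtain c d where cd: "?B n \<inter> box a b = box c d"
      using box_Int_box by blast
    have "(\<integral>x. h x * indicator (?B n) x * indicator (box a b) x \<partial>lborel)
        = (\<integral>x. h x * indicator (box c d) x \<partial>lborel)"
      by (intro Bochner_Integration.integral_cong) (auto simp: indicator_def cd[symmetric])
    then show "(\<integral>x. h x * indicator (?B n) x * indicator (box a b) x \<partial>lborel) = 0"
      using zero by simp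
  qed
  then have "AE x in lborel. \<forall>n. h x * indicator (?B n) x = 0"
    unfolding AE_all_countable ..
  then show ?thesis
  proof eventually_elim
    case (elim x)
    obtain n where "x \<in> ?B n" using UN_box_eq_UNIV by blast
    then show ?case using elim[rule_format, of n] by simp
  qed
qed

lemma borel_measurable_vec_nth [measurable]: "(\<lambda>x::real^'n. x $ i) \<in> borel_measurable borel"
  by (intro borel_measurable_continuous_onI continuous_on_component continuous_on_id)

lemma integrable_mult_cutoff:
  fixes f c :: "'a \<Rightarrow> real"
  assumes f: "integrable M (\<lambda>x. f x * indicator A x)" and c: "c \<in> borel_measurable M"
    and le: "\<And>x. \<bar>c x\<bar> \<le> indicator A x"
  shows "integrable M (\<lambda>x. f x * c x)"
proof -
  have eq: "(\<lambda>x. f x * c x) = (\<lambda>x. f x * indicator A x * c x)"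
    using le by (intro ext) (smt (verit) indicator_simps mult_cancel_left1 mult_eq_0_iff)
  have "integrable M (\<lambda>x. f x * indicator A x * c x)"
  proof (rule Bochner_Integration.integrable_bound[OF f])
    show "(\<lambda>x. f x * indicator A x * c x) \<in> borel_measurable M"
      using f c by measurable
    show "AE x in M. norm (f x * indicator A x * c x) \<le> norm (f x * indicator A x)"
    proof (intro AE_I2)
      fix x
      show "norm (f x * indicator A x * c x) \<le> norm (f x * indicator A x)"
        using le[of x] by (cases "x \<in> A") (auto simp: abs_mult intro: mult_left_le)
    qed
  qed
  then show ?thesis unfolding eq .
qed

lemma L2_grad_integrable_cbox:
  assumes "L2_grad u g"
  shows "integrable lborel (\<lambda>x. g x $ i * indicator (cbox a b) x)"
proof (rule Bochner_Integration.integrable_bound)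
  have [measurable]: "g \<in> borel_measurable lborel" and sq: "integrable lborel (\<lambda>x. (norm (g x))\<^sup>2)"
    using assms by (auto simp: L2_grad_def)
  have "integrable lborel (indicat_real (cbox a b))"
    using emeasure_lborel_cbox_finite[of a b] by (simp add: integrable_indicator_iff)
  with sq show "integrable lborel (\<lambda>x. (norm (g x))\<^sup>2 + indicator (cbox a b) x)"
    by simp
  show "(\<lambda>x. g x $ i * indicator (cbox a b) x) \<in> borel_measurable lborel"
    by measurable
  have "\<bar>g x $ i\<bar> \<le> (norm (g x))\<^sup>2 + 1" for x
  proof -
    have "0 \<le> (norm (g x) - 1)\<^sup>2" by simp
    then show ?thesis
      using component_le_norm_cart[of "g x" i] norm_ge_zero[of "g x"] by (simp add: power2_diff)
  qed
  then show "AE x in lborel. norm (g x $ i * indicator (cbox a b) x)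
      \<le> norm ((norm (g x))\<^sup>2 + indicator (cbox a b) x)"
    by (auto simp: indicator_def)
qed

lemma abs_box_approx_le_indicator: "\<bar>box_approx k a b x\<bar> \<le> indicator (cbox a b) x"
  using box_approx_bounds[of k a b x] box_approx_eq_0[of x a b k] box_subset_cbox
  by (auto simp: indicator_def)

lemma box_integral_eq_0_if_box_approx_integrals_eq_0:
  fixes h :: "R2 \<Rightarrow> real"
  assumes [measurable]: "h \<in> borel_measurable lborel"
    and int: "integrable lborel (\<lambda>x. h x * indicator (cbox a b) x)"
    and zero: "\<And>k. (\<integral>x. h x * box_approx k a b x \<partial>lborel) = 0"
  shows "(\<integral>x. h x * indicator (box a b) x \<partial>lborel) = 0"
proof -
  have "(\<lambda>k. \<integral>x. h x * box_approx k a b x \<partial>lborel) \<longlonglongrightarrow> (\<integral>x. h x * indicator (box a b) x \<partial>lborel)"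
  proof (rule integral_dominated_convergence[where w="\<lambda>x. \<bar>h x * indicator (cbox a b) x\<bar>"])
    show "(\<lambda>x. h x * indicator (box a b) x) \<in> borel_measurable lborel"
      "(\<lambda>x. h x * box_approx k a b x) \<in> borel_measurable lborel" for k
      using box_approx_measurable by measurable
    show "integrable lborel (\<lambda>x. \<bar>h x * indicator (cbox a b) x\<bar>)"
      using int by simp
    show "AE x in lborel. (\<lambda>k. h x * box_approx k a b x) \<longlonglongrightarrow> h x * indicator (box a b) x"
      by (intro AE_I2 tendsto_mult tendsto_const box_approx_tendsto_indicator)
    show "AE x in lborel. norm (h x * box_approx k a b x) \<le> \<bar>h x * indicator (cbox a b) x\<bar>" for k
      using abs_box_approx_le_indicator by (auto simp: abs_mult intro!: mult_left_mono)
  qed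
  then show ?thesis
    by (simp add: zero LIMSEQ_const_iff)
qed

lemma L2_grad_integral_box_approx_eq:
  assumes "L2_grad u g"
  shows "(\<integral>x. g x $ i * box_approx k a b x \<partial>lborel)
      = - (\<integral>x. u x * frechet_derivative (box_approx k a b) (at x) (axis i 1) \<partial>lborel)"
  using assms test_fun_box_approx unfolding L2_grad_def weak_grad_def by simp

lemma L2_grad_integrable_box_approx:
  assumes "L2_grad u g"
  shows "integrable lborel (\<lambda>x. g x $ i * box_approx k a b x)"
  using integrable_mult_cutoff[OF L2_grad_integrable_cbox[OF assms] box_approx_measurable
      abs_box_approx_le_indicator] .

lemma L2_grad_unique:
  assumes g1: "L2_grad u g1" and g2: "L2_grad u g2"
  shows "AE x in lborel. g1 x = g2 x"
proof -
  have "AE x in lborel. g1 x $ i - g2 x $ i = 0" for i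
  proof (rule AE_zero_if_local_box_integrals_zero)
    fix a b :: R2
    have [measurable]: "g1 \<in> borel_measurable lborel" "g2 \<in> borel_measurable lborel"
      using g1 g2 by (simp_all add: L2_grad_def)
    have int_cbox: "integrable lborel (\<lambda>x. (g1 x $ i - g2 x $ i) * indicator (cbox a b) x)"
      using L2_grad_integrable_cbox[OF g1] L2_grad_integrable_cbox[OF g2]
      by (simp add: left_diff_distrib)
    have "(\<integral>x. (g1 x $ i - g2 x $ i) * box_approx k a b x \<partial>lborel)
        = (\<integral>x. g1 x $ i * box_approx k a b x \<partial>lborel) - (\<integral>x. g2 x $ i * box_approx k a b x \<partial>lborel)"
      for k
      using L2_grad_integrable_box_approx[OF g1] L2_grad_integrable_box_approx[OF g2]
      by (simp add: left_diff_distrib)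
    then have "(\<integral>x. (g1 x $ i - g2 x $ i) * box_approx k a b x \<partial>lborel) = 0" for k
      by (simp add: L2_grad_integral_box_approx_eq[OF g1] L2_grad_integral_box_approx_eq[OF g2])
    moreover have "(\<lambda>x. g1 x $ i - g2 x $ i) \<in> borel_measurable lborel"
      by measurable
    ultimately show "(\<integral>x. (g1 x $ i - g2 x $ i) * indicator (box a b) x \<partial>lborel) = 0"
      using box_integral_eq_0_if_box_approx_integrals_eq_0[OF _ int_cbox] by blast
    have "\<bar>indicator (box a b) x\<bar> \<le> (indicator (cbox a b) x :: real)" for x
      using box_subset_cbox by (auto simp: indicator_def)
    then show "integrable lborel (\<lambda>x. (g1 x $ i - g2 x $ i) * indicator (box a b) x)"
      using integrable_mult_cutoff[OF int_cbox] by simp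
  qed
  then have "AE x in lborel. \<forall>i. g1 x $ i = g2 x $ i"
    by (simp add: eventually_all_finite)
  then show ?thesis
    by eventually_elim (simp add: vec_eq_iff)
qed

section \<open>Scaling\<close>

lemma L2_grad_scale:
  assumes "L2_grad u g"
  shows "L2_grad (\<lambda>x. c * u x) (\<lambda>x. c *\<^sub>R g x)"
  unfolding L2_grad_def
proof (intro conjI)
  show "(\<lambda>x. c *\<^sub>R g x) \<in> borel_measurable lborel"
    using assms by (simp add: L2_grad_def borel_measurable_scaleR)
  have "integrable lborel (\<lambda>x. c\<^sup>2 * (norm (g x))\<^sup>2)"
    using assms by (simp add: L2_grad_def)
  then show "integrable lborel (\<lambda>x. (norm (c *\<^sub>R g x))\<^sup>2)"
    by (simp add: power_mult_distrib)
  show "weak_grad (\<lambda>x. c * u x) (\<lambda>x. c *\<^sub>R g x)"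
    using assms by (simp add: L2_grad_def weak_grad_def mult.assoc)
qed

lemma L2_grad_grad: "u \<in> H1 \<Longrightarrow> L2_grad u (grad u)"
  using someI[of "L2_grad u"] unfolding H1_def grad_def by blast

lemma H1_scale: "u \<in> H1 \<Longrightarrow> (\<lambda>x. c * u x) \<in> H1"
  using L2_grad_scale[OF L2_grad_grad] unfolding H1_def
  by (auto simp: power_mult_distrib)

lemma grad_norm2_scale:
  assumes u: "u \<in> H1"
  shows "grad_norm2 (\<lambda>x. c * u x) = c\<^sup>2 * grad_norm2 u"
proof -
  have L2: "L2_grad (\<lambda>x. c * u x) (grad (\<lambda>x. c * u x))" "L2_grad (\<lambda>x. c * u x) (\<lambda>x. c *\<^sub>R grad u x)"
    using L2_grad_grad[OF H1_scale[OF u]] L2_grad_scale[OF L2_grad_grad[OF u]] .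
  then have "AE x in lborel. grad (\<lambda>x. c * u x) x = c *\<^sub>R grad u x"
    by (rule L2_grad_unique)
  with L2 have "grad_norm2 (\<lambda>x. c * u x) = (\<integral>x. (norm (c *\<^sub>R grad u x))\<^sup>2 \<partial>lborel)"
    unfolding grad_norm2_def L2_grad_def by (intro integral_cong_AE) auto
  then show ?thesis
    by (simp add: grad_norm2_def power_mult_distrib)
qed

lemma Xspace_scale: "u \<in> Xspace \<Longrightarrow> (\<lambda>x. c * u x) \<in> Xspace"
proof -
  assume u: "u \<in> Xspace"
  then have "integrable lborel (\<lambda>x. c\<^sup>2 * (ln (1 + norm x) * (u x)\<^sup>2))"
    by (simp add: Xspace_def)
  with u show ?thesis
    using H1_scale unfolding Xspace_def by (auto simp: power_mult_distrib mult.left_commute)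
qed

lemma X_norm_scale:
  assumes "u \<in> H1"
  shows "X_norm (\<lambda>x. c * u x) = \<bar>c\<bar> * X_norm u"
proof -
  have "X_norm (\<lambda>x. c * u x)
      = sqrt (c\<^sup>2 * (grad_norm2 u + L2_norm2 u + (\<integral>x. ln (1 + norm x) * (u x)\<^sup>2 \<partial>lborel)))"
    unfolding X_norm_def grad_norm2_scale[OF assms] L2_norm2_def
    by (simp add: power_mult_distrib algebra_simps)
  then show ?thesis
    by (simp add: real_sqrt_mult X_norm_def)
qed

lemma grad_norm2_nonneg: "0 \<le> grad_norm2 u"
  by (simp add: grad_norm2_def)

lemma L2_norm2_nonneg: "0 \<le> L2_norm2 u"
  by (simp add: L2_norm2_def)

lemma X_norm_nonneg: "0 \<le> X_norm u"
  using grad_norm2_nonneg[of u] L2_norm2_nonneg[of u]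
    Bochner_Integration.integral_nonneg[of lborel "\<lambda>x. ln (1 + norm x) * (u x)\<^sup>2"]
  by (simp add: X_norm_def)

lemma Pfun_scale: "Pfun V (\<lambda>x. c * u x) = c ^ 4 * Pfun V u"
proof -
  have "(\<lambda>y. V (norm (x - y)) * (c * u x)\<^sup>2 * (c * u y)\<^sup>2)
      = (\<lambda>y. c ^ 4 * (V (norm (x - y)) * (u x)\<^sup>2 * (u y)\<^sup>2))" for x
    by (simp add: fun_eq_iff power_mult_distrib mult_ac power_numeral_reduce)
  then show ?thesis
    by (simp add: Pfun_def)
qed

lemma Ifun_along_ray:
  assumes "u \<in> H1"
  shows "Ifun a b \<mu> Q V f (\<lambda>x. s * u x) =
    (a / 2 * grad_norm2 u + 1 / 2 * (\<integral>x. Q x * (u x)\<^sup>2 \<partial>lborel)) * s\<^sup>2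
    + (b / 4 * (grad_norm2 u)\<^sup>2 + \<mu> / 4 * Pfun V u) * s ^ 4
    - (\<integral>x. prim f (s * u x) \<partial>lborel)"
proof -
  have "(\<lambda>x. Q x * (s * u x)\<^sup>2) = (\<lambda>x. s\<^sup>2 * (Q x * (u x)\<^sup>2))"
    by (simp add: fun_eq_iff power_mult_distrib mult_ac)
  then have "(\<integral>x. Q x * (s * u x)\<^sup>2 \<partial>lborel) = s\<^sup>2 * (\<integral>x. Q x * (u x)\<^sup>2 \<partial>lborel)"
    by simp
  then show ?thesis
    unfolding Ifun_def grad_norm2_scale[OF assms] Pfun_scale
    by (simp add: algebra_simps power_mult_distrib)
qed

section \<open>The primitive \<open>F\<close>\<close>

lemma prim_eq_integral_from:
  fixes f :: "real \<Rightarrow> real"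
  assumes f: "continuous_on UNIV f" and "0 \<le> R" "- R \<le> t"
  shows "prim f t = integral {-R..t} f - integral {-R..0} f"
proof -
  have "integral {-R..0} f + integral {0..t} f = integral {-R..t} f" if "0 \<le> t"
    using assms that by (intro Henstock_Kurzweil_Integration.integral_combine)
      (auto intro!: integrable_continuous_interval continuous_on_subset[OF f])
  moreover have "integral {-R..t} f + integral {t..0} f = integral {-R..0} f" if "t < 0"
    using assms that by (intro Henstock_Kurzweil_Integration.integral_combine)
      (auto intro!: integrable_continuous_interval continuous_on_subset[OF f])
  ultimately show ?thesis
    by (cases "0 \<le> t") (auto simp: prim_def)
qed

lemma has_real_derivative_prim:
  fixes f :: "real \<Rightarrow> real"
  assumes f: "continuous_on UNIV f"
  shows "(prim f has_real_derivative f t) (at t)"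
proof -
  define R where "R = \<bar>t\<bar> + 1"
  have "((\<lambda>x. integral {-R..x} f - integral {-R..0} f) has_real_derivative f t) (at t within {-R..R})"
    unfolding R_def
    by (auto intro!: derivative_eq_intros integral_has_real_derivative continuous_on_subset[OF f])
  then have "((\<lambda>x. integral {-R..x} f - integral {-R..0} f) has_real_derivative f t) (at t)"
    by (subst (asm) at_within_interior) (auto simp: R_def)
  then show ?thesis
    by (rule has_field_derivative_transform_within_open[of _ _ _ "{-R<..}"])
       (use prim_eq_integral_from[OF f, of R] in \<open>auto simp: R_def\<close>)
qed

lemma continuous_on_prim: "continuous_on UNIV f \<Longrightarrow> continuous_on UNIV (prim f)"
  using has_real_derivative_prim by (metis DERIV_isCont continuous_at_imp_continuous_on)

text \<open>The Ambrosetti--Rabinowitz condition \<open>k F(t) \<le> f(t) t\<close> makes \<open>r \<mapsto> F(r y) / r\<^sup>k\<close>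
  nondecreasing on \<open>r > 0\<close>.\<close>

lemma prim_scale_le:
  fixes f :: "real \<Rightarrow> real"
  assumes f: "continuous_on UNIV f" and AR: "\<And>t. real k * prim f t \<le> f t * t"
    and s: "0 < s" "s \<le> 1"
  shows "prim f (s * y) \<le> s ^ k * prim f y"
proof -
  define h' where "h' r = (f (r * y) * y * r ^ k - prim f (r * y) * (real k * r ^ (k - 1))) / (r ^ k)\<^sup>2"
    for r
  have deriv: "((\<lambda>r. prim f (r * y) / r ^ k) has_real_derivative h' r) (at r)" if "0 < r" for r
    using that unfolding h'_def
    by (auto intro!: derivative_eq_intros DERIV_chain2[OF has_real_derivative_prim[OF f]]
        simp: power2_eq_square)
  have h'_nonneg: "0 \<le> h' r" if "0 < r" for r
  proof -
    have "0 \<le> r ^ k * (f (r * y) * (r * y) - real k * prim f (r * y))"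
      using AR[of "r * y"] that by simp
    also have "\<dots> = r * (f (r * y) * y * r ^ k - prim f (r * y) * (real k * r ^ (k - 1)))"
      by (cases k) (simp_all add: algebra_simps)
    finally have "0 \<le> f (r * y) * y * r ^ k - prim f (r * y) * (real k * r ^ (k - 1))"
      using that by (simp add: zero_le_mult_iff)
    then show ?thesis
      by (simp add: h'_def)
  qed
  have "prim f (s * y) / s ^ k \<le> prim f (1 * y) / 1 ^ k"
  proof (rule DERIV_nonneg_imp_increasing_open[OF s(2)])
    fix r assume "s < r" "r < 1"
    then show "\<exists>z. ((\<lambda>r. prim f (r * y) / r ^ k) has_real_derivative z) (at r) \<and> 0 \<le> z"
      using deriv h'_nonneg s by (meson less_trans)
  next
    show "continuous_on {s..1} (\<lambda>r. prim f (r * y) / r ^ k)"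
      using s by (intro continuous_at_imp_continuous_on ballI DERIV_isCont[OF deriv]) auto
  qed
  then show ?thesis
    using s by (simp add: field_simps)
qed

lemma prim_le_prim_scale:
  fixes f :: "real \<Rightarrow> real"
  assumes f: "continuous_on UNIV f" and AR: "\<And>t. real k * prim f t \<le> f t * t"
    and nonneg: "\<And>t. 0 \<le> prim f t" and s: "1 \<le> s"
  shows "prim f y \<le> prim f (s * y)"
proof -
  have "prim f (1 / s * (s * y)) \<le> (1 / s) ^ k * prim f (s * y)"
    using s by (intro prim_scale_le[OF f AR]) auto
  also have "\<dots> \<le> prim f (s * y)"
    using s nonneg[of "s * y"] by (intro mult_left_le_one_le) (auto simp: power_le_one)
  finally show ?thesis
    using s by simp
qed

text \<open>The Lebesgue integral of a non-integrable function is \<open>0\<close>, which is why the second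
  alternative appears.\<close>

lemma integral_prim_scale_cases:
  fixes f :: "real \<Rightarrow> real"
  assumes f: "continuous_on UNIV f" and AR: "\<And>t. real k * prim f t \<le> f t * t"
    and nonneg: "\<And>t. 0 \<le> prim f t" and u: "u \<in> borel_measurable lborel"
  shows "(\<forall>s. 0 < s \<and> s \<le> 1 \<longrightarrow>
            (\<integral>x. prim f (s * u x) \<partial>lborel) \<le> s ^ k * (\<integral>x. prim f (u x) \<partial>lborel))
       \<or> (\<forall>s. 1 \<le> s \<longrightarrow> (\<integral>x. prim f (s * u x) \<partial>lborel) = 0)"
proof -
  have meas: "(\<lambda>x. prim f (s * u x)) \<in> borel_measurable lborel" for s
    using borel_measurable_continuous_onI[OF continuous_on_prim[OF f]] u by measurable
  show ?thesis
  proof (cases "integrable lborel (\<lambda>x. prim f (u x))")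
    case True
    have "(\<integral>x. prim f (s * u x) \<partial>lborel) \<le> (\<integral>x. s ^ k * prim f (u x) \<partial>lborel)"
      if s: "0 < s" "s \<le> 1" for s
    proof (rule integral_mono)
      show le: "prim f (s * u x) \<le> s ^ k * prim f (u x)" for x
        by (rule prim_scale_le[OF f AR s])
      show "integrable lborel (\<lambda>x. s ^ k * prim f (u x))"
        using True by simp
      then show "integrable lborel (\<lambda>x. prim f (s * u x))"
      proof (rule Bochner_Integration.integrable_bound[OF _ meas], intro AE_I2)
        fix x
        show "norm (prim f (s * u x)) \<le> norm (s ^ k * prim f (u x))"
          using le[of x] nonneg[of "s * u x"] abs_ge_self[of "s ^ k * prim f (u x)"] by simp
      qed
    qed
    then show ?thesis by simp
  next
    case False
    have "\<not> integrable lborel (\<lambda>x. prim f (s * u x))" if "1 \<le> s" for s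
    proof
      assume "integrable lborel (\<lambda>x. prim f (s * u x))"
      then have "integrable lborel (\<lambda>x. prim f (1 * u x))"
      proof (rule Bochner_Integration.integrable_bound[OF _ meas], intro AE_I2)
        fix x
        show "norm (prim f (1 * u x)) \<le> norm (prim f (s * u x))"
          using prim_le_prim_scale[OF f AR nonneg that, of "u x"] nonneg[of "u x"] by simp
      qed
      with False show False by simp
    qed
    then show ?thesis
      by (simp add: not_integrable_integral_eq)
  qed
qed

section \<open>The estimate for \<open>4 I(u) - I'(u) u\<close>\<close>

lemma DERIV_le_if_subhomogeneous:
  fixes g p \<Phi> :: "real \<Rightarrow> real"
  assumes g: "(g has_real_derivative g') (at 1)" and p: "(p has_real_derivative p') (at 1)"
    and eq: "\<And>s. g s = p s - \<Phi> s"
    and cases: "(\<forall>s. 0 < s \<and> s \<le> 1 \<longrightarrow> \<Phi> s \<le> s ^ k * \<Phi> 1) \<or> (\<forall>s. 1 \<le> s \<longrightarrow> \<Phi> s = 0)"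
  shows "g' \<le> p' - real k * \<Phi> 1"
proof (rule ccontr)
  assume "\<not> ?thesis"
  then have pos: "0 < real k * \<Phi> 1 + g' - p'"
    by simp
  \<comment> \<open>\<open>h\<close> vanishes at \<open>1\<close> and is \<open>\<ge> 0\<close> to its left or \<open>= 0\<close> to its right, so \<open>h'(1) \<le> 0\<close>.\<close>
  define h where "h s = s ^ k * \<Phi> 1 + g s - p s" for s
  have deriv: "(h has_real_derivative real k * \<Phi> 1 + g' - p') (at 1)"
    unfolding h_def[abs_def] by (auto intro!: derivative_eq_intros g p)
  have h_eq: "h s = s ^ k * \<Phi> 1 - \<Phi> s" for s
    by (simp add: h_def eq)
  from cases show False
  proof
    assume le: "\<forall>s. 0 < s \<and> s \<le> 1 \<longrightarrow> \<Phi> s \<le> s ^ k * \<Phi> 1"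
    obtain d where "0 < d" and "\<forall>t>0. t < d \<longrightarrow> h (1 - t) < h 1"
      using DERIV_pos_inc_left[OF deriv pos] by blast
    then have "h (1 - min (d / 2) (1 / 2)) < 0"
      by (simp add: h_eq)
    moreover have "0 \<le> h (1 - min (d / 2) (1 / 2))"
      using le \<open>0 < d\<close> by (simp add: h_eq)
    ultimately show False by simp
  next
    assume zero: "\<forall>s. 1 \<le> s \<longrightarrow> \<Phi> s = 0"
    obtain d where "0 < d" and "\<forall>t>0. t < d \<longrightarrow> h 1 < h (1 + t)"
      using DERIV_pos_inc_right[OF deriv pos] by blast
    then have "h 1 < h (1 + d / 2)"
      by simp
    then show False
      using zero \<open>0 < d\<close> by (simp add: h_eq)
  qed
qed

lemma frechet_X_scale:
  assumes "frechet_X J u D" "v \<in> Xspace"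
  shows "D (\<lambda>x. c * v x) = c * D v"
proof -
  have "D (\<lambda>x. c * v x + 0 * v x) = c * D v + 0 * D v"
    using assms unfolding frechet_X_def by blast
  then show ?thesis by simp
qed

lemma frechet_X_ray_derivative:
  assumes Fr: "frechet_X J u D" and u: "u \<in> Xspace"
  shows "((\<lambda>s. J (\<lambda>x. s * u x)) has_real_derivative D u) (at 1)"
  unfolding has_field_derivative_def has_derivative_at_alt
proof (intro conjI allI impI)
  show "bounded_linear ((*) (D u))"
    by (rule bounded_linear_mult_right)
  fix e :: real assume "0 < e"
  define X where "X = X_norm u"
  have "0 \<le> X" by (simp add: X_def X_norm_nonneg)
  have "0 < e / (X + 1)"
    using \<open>0 < e\<close> \<open>0 \<le> X\<close> by simp
  then obtain \<delta> where "0 < \<delta>" and small: "\<And>h. h \<in> Xspace \<Longrightarrow> X_norm h < \<delta> \<Longrightarrow>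
      \<bar>J (\<lambda>x. u x + h x) - J u - D h\<bar> \<le> e / (X + 1) * X_norm h"
    using Fr unfolding frechet_X_def by blast
  show "\<exists>d>0. \<forall>s. norm (s - 1) < d \<longrightarrow>
      norm (J (\<lambda>x. s * u x) - J (\<lambda>x. 1 * u x) - D u * (s - 1)) \<le> e * norm (s - 1)"
  proof (intro exI[of _ "\<delta> / (X + 1)"] conjI allI impI)
    show "0 < \<delta> / (X + 1)"
      using \<open>0 < \<delta>\<close> \<open>0 \<le> X\<close> by simp
    fix s :: real assume "norm (s - 1) < \<delta> / (X + 1)"
    then have "\<bar>s - 1\<bar> * (X + 1) < \<delta>"
      using \<open>0 \<le> X\<close> by (simp add: field_simps)
    moreover have norm_h: "X_norm (\<lambda>x. (s - 1) * u x) = \<bar>s - 1\<bar> * X"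
      using u by (simp add: X_def X_norm_scale Xspace_def)
    moreover have "\<bar>s - 1\<bar> * X \<le> \<bar>s - 1\<bar> * (X + 1)"
      by (simp add: mult_left_mono)
    ultimately have "X_norm (\<lambda>x. (s - 1) * u x) < \<delta>"
      by linarith
    from small[OF Xspace_scale[OF u] this]
    have "\<bar>J (\<lambda>x. u x + (s - 1) * u x) - J u - (s - 1) * D u\<bar> \<le> e / (X + 1) * (\<bar>s - 1\<bar> * X)"
      unfolding frechet_X_scale[OF Fr u] norm_h .
    moreover have "(\<lambda>x. u x + (s - 1) * u x) = (\<lambda>x. s * u x)"
      by (simp add: algebra_simps)
    ultimately have "\<bar>J (\<lambda>x. s * u x) - J u - (s - 1) * D u\<bar> \<le> e / (X + 1) * (\<bar>s - 1\<bar> * X)"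
      by simp
    also have "\<dots> \<le> e * \<bar>s - 1\<bar>"
      using \<open>0 < e\<close> \<open>0 \<le> X\<close> by (simp add: field_simps mult_left_mono)
    finally show "norm (J (\<lambda>x. s * u x) - J (\<lambda>x. 1 * u x) - D u * (s - 1)) \<le> e * norm (s - 1)"
      by (simp add: mult.commute)
  qed
qed

lemma abs_le_dual_norm:
  assumes Fr: "frechet_X J u D" and v: "v \<in> Xspace"
  shows "\<bar>D v\<bar> \<le> dual_norm D * X_norm v"
proof -
  obtain C where bound: "\<And>w. w \<in> Xspace \<Longrightarrow> \<bar>D w\<bar> \<le> C * X_norm w"
    using Fr unfolding frechet_X_def by blast
  show ?thesis
  proof (cases "X_norm v = 0")
    case True
    then show ?thesis using bound[OF v] by simp
  next
    case False
    then have pos: "0 < X_norm v" using X_norm_nonneg[of v] by simp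
    define w where "w x = inverse (X_norm v) * v x" for x
    have w: "w \<in> Xspace" "X_norm w = 1"
      using Xspace_scale[OF v] X_norm_scale[of v "inverse (X_norm v)"] v pos
      by (simp_all add: w_def[abs_def] Xspace_def)
    have "bdd_above ((\<lambda>w. \<bar>D w\<bar>) ` {w \<in> Xspace. X_norm w \<le> 1})"
    proof (rule bdd_aboveI)
      fix y assume "y \<in> (\<lambda>w. \<bar>D w\<bar>) ` {w \<in> Xspace. X_norm w \<le> 1}"
      then obtain w where "w \<in> Xspace" "X_norm w \<le> 1" "y = \<bar>D w\<bar>" by auto
      then have "y \<le> C * X_norm w"
        using bound by simp
      also have "\<dots> \<le> max C 0 * X_norm w"
        by (intro mult_right_mono) (auto simp: X_norm_nonneg)
      also have "\<dots> \<le> max C 0"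
        using \<open>X_norm w \<le> 1\<close> by (intro mult_left_le) auto
      finally show "y \<le> max C 0" .
    qed
    then have "\<bar>D w\<bar> \<le> dual_norm D"
      unfolding dual_norm_def using w by (intro cSup_upper) auto
    moreover have "(\<lambda>x. X_norm v * w x) = v"
      using pos by (simp add: w_def mult.assoc[symmetric])
    then have "D v = X_norm v * D w"
      using frechet_X_scale[OF Fr w(1), of "X_norm v"] by simp
    ultimately show ?thesis
      using pos by (simp add: abs_mult mult.commute mult_left_mono)
  qed
qed

lemma Ifun_quadratic_part_le:
  assumes u: "u \<in> Xspace" and Fr: "frechet_X (Ifun a b \<mu> Q V f) u D"
    and f: "continuous_on UNIV f" and AR: "\<And>t. 4 * prim f t \<le> f t * t"
    and nonneg: "\<And>t. 0 \<le> prim f t"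
  shows "a * grad_norm2 u + (\<integral>x. Q x * (u x)\<^sup>2 \<partial>lborel) \<le> 4 * Ifun a b \<mu> Q V f u - D u"
proof -
  have uH: "u \<in> H1" using u by (simp add: Xspace_def)
  define \<alpha> where "\<alpha> = a / 2 * grad_norm2 u + 1 / 2 * (\<integral>x. Q x * (u x)\<^sup>2 \<partial>lborel)"
  define \<beta> where "\<beta> = b / 4 * (grad_norm2 u)\<^sup>2 + \<mu> / 4 * Pfun V u"
  define \<Phi> where "\<Phi> s = (\<integral>x. prim f (s * u x) \<partial>lborel)" for s
  have ray: "Ifun a b \<mu> Q V f (\<lambda>x. s * u x) = (\<alpha> * s\<^sup>2 + \<beta> * s ^ 4) - \<Phi> s" for s
    unfolding Ifun_along_ray[OF uH] \<alpha>_def \<beta>_def \<Phi>_def by simp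
  have "D u \<le> (2 * \<alpha> + 4 * \<beta>) - real 4 * \<Phi> 1"
  proof (rule DERIV_le_if_subhomogeneous[OF frechet_X_ray_derivative[OF Fr u] _ ray])
    show "((\<lambda>s. \<alpha> * s\<^sup>2 + \<beta> * s ^ 4) has_real_derivative 2 * \<alpha> + 4 * \<beta>) (at 1)"
      by (auto intro!: derivative_eq_intros)
    have "u \<in> borel_measurable lborel" and "\<And>t. real 4 * prim f t \<le> f t * t"
      using uH AR by (simp_all add: H1_def)
    from integral_prim_scale_cases[OF f this(2) nonneg this(1)]
    show "(\<forall>s. 0 < s \<and> s \<le> 1 \<longrightarrow> \<Phi> s \<le> s ^ 4 * \<Phi> 1) \<or> (\<forall>s. 1 \<le> s \<longrightarrow> \<Phi> s = 0)"
      by (simp add: \<Phi>_def)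
  qed
  moreover have "Ifun a b \<mu> Q V f u = \<alpha> + \<beta> - \<Phi> 1"
    using ray[of 1] by simp
  ultimately show ?thesis
    by (simp add: \<alpha>_def)
qed

lemma not_integrable_if_bounded_below:
  fixes g :: "'a::euclidean_space \<Rightarrow> real"
  assumes "0 < c" "\<And>x. c \<le> g x"
  shows "\<not> integrable lborel g"
proof
  assume "integrable lborel g"
  then have "integrable lborel (\<lambda>x::'a. c)"
  proof (rule Bochner_Integration.integrable_bound)
    show "AE x in lborel. norm c \<le> norm (g x)"
      using assms by (intro AE_I2) (smt (verit) real_norm_def)
  qed simp
  then show False
    using assms(1) by (simp add: integrable_iff_bounded ennreal_mult_less_top)
qed

lemma cond_Q_L2_lower_bound:
  assumes "cond_Q Q"
  obtains Q0 where "0 < Q0" "\<And>u. u \<in> H1 \<Longrightarrow> Q0 * L2_norm2 u \<le> (\<integral>x. Q x * (u x)\<^sup>2 \<partial>lborel)"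
proof -
  obtain Q0 where Q0: "0 < Q0" "\<And>x. Q0 \<le> Q x"
    using assms unfolding cond_Q_def by blast
  have [measurable]: "Q \<in> borel_measurable lborel"
    using assms by (simp add: cond_Q_def borel_measurable_continuous_onI)
  \<comment> \<open>\<open>Q \<ge> Q\<^sub>0 > 0\<close> excludes the \<open>L\<^sup>p\<close> alternative of (Q), so \<open>Q\<close> is essentially bounded.\<close>
  have "\<not> integrable lborel (\<lambda>x. \<bar>Q x\<bar> powr p)" if "1 < p" for p
    using Q0 that
    by (intro not_integrable_if_bounded_below[of "Q0 powr p"])
       (auto intro!: powr_mono2 intro: order_trans[OF _ abs_ge_self])
  then obtain M where M: "AE x in lborel. \<bar>Q x\<bar> \<le> M"
    using assms unfolding cond_Q_def by blast
  have "Q0 * L2_norm2 u \<le> (\<integral>x. Q x * (u x)\<^sup>2 \<partial>lborel)" if "u \<in> H1" for u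
  proof -
    have [measurable]: "u \<in> borel_measurable lborel" and sq: "integrable lborel (\<lambda>x. (u x)\<^sup>2)"
      using that by (simp_all add: H1_def)
    have "integrable lborel (\<lambda>x. Q x * (u x)\<^sup>2)"
    proof (rule Bochner_Integration.integrable_bound[of _ "\<lambda>x. M * (u x)\<^sup>2"])
      show "integrable lborel (\<lambda>x. M * (u x)\<^sup>2)" using sq by simp
      show "AE x in lborel. norm (Q x * (u x)\<^sup>2) \<le> norm (M * (u x)\<^sup>2)"
        using M by eventually_elim (auto simp: abs_mult intro: mult_right_mono order_trans[OF _ abs_ge_self])
    qed simp
    with sq Q0 show ?thesis
      unfolding L2_norm2_def integral_mult_right_zero[symmetric]
      by (intro integral_mono) (auto intro: mult_right_mono)
  qed
  with Q0 that show ?thesis by blast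
qed

lemma cond_f_prim:
  assumes "cond_f f"
  shows "continuous_on UNIV f" "\<And>t. 4 * prim f t \<le> f t * t" "\<And>t. 0 \<le> prim f t"
proof -
  obtain \<theta> where "4 \<le> \<theta>" and AR: "\<And>t. t \<noteq> 0 \<Longrightarrow> \<theta> * prim f t \<le> f t * t \<and> 0 < prim f t"
    using assms unfolding cond_f_def by blast
  show "continuous_on UNIV f"
    using assms by (simp add: cond_f_def)
  show "0 \<le> prim f t" for t
    using AR[of t] by (cases "t = 0") (auto simp: prim_def)
  show "4 * prim f t \<le> f t * t" for t
  proof (cases "t = 0")
    case False
    then have "4 * prim f t \<le> \<theta> * prim f t"
      using AR[of t] \<open>4 \<le> \<theta>\<close> by (intro mult_right_mono) auto
    with AR[of t] False show ?thesis by linarith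
  qed (simp add: prim_def)
qed

lemma H1_norm_le_Ifun_dual_norm:
  assumes u: "u \<in> Xspace" and Fr: "frechet_X (Ifun a b \<mu> Q V f) u D" and f: "cond_f f"
    and Q0: "\<And>v. v \<in> H1 \<Longrightarrow> Q0 * L2_norm2 v \<le> (\<integral>x. Q x * (v x)\<^sup>2 \<partial>lborel)"
  shows "min a Q0 * (H1_norm u)\<^sup>2 \<le> 4 * Ifun a b \<mu> Q V f u + \<bar>dual_norm D * (1 + X_norm u)\<bar>"
proof -
  have "dual_norm D * X_norm u \<le> \<bar>dual_norm D\<bar> * (1 + X_norm u)"
    using X_norm_nonneg[of u] by (intro mult_mono) auto
  then have dual: "\<bar>D u\<bar> \<le> \<bar>dual_norm D * (1 + X_norm u)\<bar>"
    using abs_le_dual_norm[OF Fr u] X_norm_nonneg[of u] by (simp add: abs_mult)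
  have "min a Q0 * (H1_norm u)\<^sup>2 \<le> a * grad_norm2 u + Q0 * L2_norm2 u"
    using grad_norm2_nonneg[of u] L2_norm2_nonneg[of u]
    by (simp add: H1_norm_def distrib_left add_mono mult_right_mono)
  also have "\<dots> \<le> a * grad_norm2 u + (\<integral>x. Q x * (u x)\<^sup>2 \<partial>lborel)"
    using Q0 u by (simp add: Xspace_def)
  also have "\<dots> \<le> 4 * Ifun a b \<mu> Q V f u - D u"
    by (rule Ifun_quadratic_part_le[OF u Fr cond_f_prim[OF f]])
  finally show ?thesis
    using dual by linarith
qed

theorem lemma4p1:
  fixes a b \<mu> :: real and V :: "real \<Rightarrow> real" and Q :: "R2 \<Rightarrow> real" and f :: "real \<Rightarrow> real"
    and u :: "nat \<Rightarrow> R2 \<Rightarrow> real" and D :: "nat \<Rightarrow> (R2 \<Rightarrow> real) \<Rightarrow> real"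
  assumes "a > 0" and "b \<ge> 0" and "\<mu> > 0"
    and "continuous_on {0<..} V"
    and "cond_V1 V" and "cond_V2 V" and "cond_V3 V"
    and "cond_Q Q" and "cond_f f"
    and "\<And>n. u n \<in> Xspace"
    and "\<exists>d>0. \<forall>n. Ifun a b \<mu> Q V f (u n) \<le> d"
    and "\<And>n. frechet_X (Ifun a b \<mu> Q V f) (u n) (D n)"
    and "(\<lambda>n. dual_norm (D n) * (1 + X_norm (u n))) \<longlonglongrightarrow> 0"
  shows "\<exists>C. \<forall>n. H1_norm (u n) \<le> C"
proof -
  obtain d where d: "\<And>n. Ifun a b \<mu> Q V f (u n) \<le> d"
    using assms(11) by blast
  obtain Q0 where "0 < Q0" and Q0: "\<And>v. v \<in> H1 \<Longrightarrow> Q0 * L2_norm2 v \<le> (\<integral>x. Q x * (v x)\<^sup>2 \<partial>lborel)"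
    using cond_Q_L2_lower_bound[OF assms(8)] by blast
  obtain K where K: "\<And>n. \<bar>dual_norm (D n) * (1 + X_norm (u n))\<bar> \<le> K"
    using convergent_imp_Bseq[OF convergentI[OF assms(13)]] unfolding Bseq_def by auto
  have "min a Q0 * (H1_norm (u n))\<^sup>2 \<le> 4 * d + K" for n
    using H1_norm_le_Ifun_dual_norm[OF assms(10)[of n] assms(12)[of n] assms(9) Q0] d[of n] K[of n]
    by linarith
  moreover have "0 < min a Q0"
    using assms(1) \<open>0 < Q0\<close> by simp
  ultimately have "H1_norm (u n) \<le> sqrt ((4 * d + K) / min a Q0)" for n
    by (intro real_le_rsqrt) (simp add: field_simps)
  then show ?thesis by blast
qed

end
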